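(* Let $d\ge1$, $p\ge1$, $\sigma>0$, $\alpha>0$, let $F$, $U$, $\Phi$ be as in the context (satisfying the standing assumption there), and let $m_0\in\mathcal P_p(\mathbb R^d)$ be absolutely continuous with density $m_0(\cdot)$. Let $(m_t)_{t\ge0}$ be a solution in $C([0,+\infty);\mathcal W_p)$ of the entropic fictitious play $\frac{dm_t}{dt}=\alpha(\hat m_t-m_t)$ with initial value $m_0$, and let $m_t(\cdot)$ be its density given by $m_t(x)=\int_0^t\alpha e^{-\alpha(t-s)}\hat m_s(x)\,ds+e^{-\alpha t}m_0(x)$. Then there exist constants $c,C>0$, depending only on $F$ and $U$, such that for every $t\ge0$ and every $x\in\mathbb R^d$, \[ m_t(x)\ge(1-e^{-\alpha t})\,c\,e^{-U(x)},\qquad m_t(x)\le(1-e^{-\alpha t})\,C\,e^{-U(x)}+e^{-\alpha t}m_0(x). \]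
   Context: $\mathcal P(\mathbb R^d)$ denotes the Borel probability measures on $\mathbb R^d$, $\mathcal P_p(\mathbb R^d)$ those with finite $p$-th moment, $\mathcal W_p$ the $p$-Wasserstein distance (also the metric space $(\mathcal P_p(\mathbb R^d),\mathcal W_p)$). Standing assumption: (a) $F:\mathcal P(\mathbb R^d)\to\mathbb R$ is non-negative and there is a continuous function $\frac{\delta F}{\delta m}:\mathcal P(\mathbb R^d)\times\mathbb R^d\to\mathbb R$ such that for all $m_0,m_1$, $F(m_1)-F(m_0)=\int_0^1\int\frac{\delta F}{\delta m}(m_\lambda,x)\,(m_1-m_0)(dx)\,d\lambda$ with $m_\lambda=(1-\lambda)m_0+\lambda m_1$; and there are $L_F,M_F>0$ with $|\frac{\delta F}{\delta m}(m,x)-\frac{\delta F}{\delta m}(m',x')|\le L_F(\mathcal W_p(m,m')+|x-x'|)$ and $|\frac{\delta F}{\delta m}(m,x)|\le M_F$ for all $m,m',x,x'$. (b) $U:\mathbb R^d\to\mathbb R$ is measurable, $\int e^{-U}dx=1$, $\operatorname{ess\,inf}U>-\infty$, $\liminf_{|x|\to\infty}U(x)/|x|^p>0$. For $m\in\mathcal P_p(\mathbb R^d)$, $\hat m=\Phi(m)$ is the probability measure with density $\hat m(x)\propto\exp(-\frac{2}{\sigma^2}\frac{\delta F}{\delta m}(m,x)-U(x))$ (the unique minimizer of $\mu\mapsto\int\frac{\delta F}{\delta m}(m,x)\mu(dx)+\frac{\sigma^2}{2}H(\mu|g)$, $g$ having density $e^{-U}$). $\hat m_t:=\Phi(m_t)$.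 The equation is understood in the sense of distributions. *)

theory Defs
  imports "HOL-Probability.Probability"
begin

definition prob_measures :: "('a::euclidean_space) measure set" where
  "prob_measures = {m. prob_space m \<and> sets m = sets borel}"

definition p_moment_measures :: "real \<Rightarrow> ('a::euclidean_space) measure set" where
  "p_moment_measures p =
     {m \<in> prob_measures. (\<integral>\<^sup>+ x. ennreal (norm x powr p) \<partial>m) < \<infinity>}"

text \<open>Couplings and the p-Wasserstein distance (extended-valued, so that it is
  meaningful for all pairs of Borel probability measures).\<close>

definition couplings :: "('a::euclidean_space) measure \<Rightarrow> 'a measure \<Rightarrow> ('a \<times> 'a) measure set" where
  "couplings \<mu> \<nu> = {\<pi>. prob_space \<pi> \<and> sets \<pi> = sets (borel :: ('a \<times> 'a) measure)
       \<and> distr \<pi> borel fst = \<mu> \<and> distr \<pi> borel snd = \<nu>}"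

definition wasserstein :: "real \<Rightarrow> ('a::euclidean_space) measure \<Rightarrow> 'a measure \<Rightarrow> ennreal" where
  "wasserstein p \<mu> \<nu> =
     (let I = (INF \<pi>\<in>couplings \<mu> \<nu>. \<integral>\<^sup>+ z. ennreal (dist (fst z) (snd z) powr p) \<partial>\<pi>)
      in if I = \<top> then \<top> else ennreal (enn2real I powr (1 / p)))"

definition mix_measure :: "real \<Rightarrow> ('a::euclidean_space) measure \<Rightarrow> 'a measure \<Rightarrow> 'a measure" where
  "mix_measure l m0 m1 = measure_of UNIV (sets borel)
     (\<lambda>A. ennreal (1 - l) * emeasure m0 A + ennreal l * emeasure m1 A)"

definition linear_derivative ::
  "(('a::euclidean_space) measure \<Rightarrow> real) \<Rightarrow> ('a measure \<Rightarrow> 'a \<Rightarrow> real) \<Rightarrow> bool" where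
  "linear_derivative F dF \<longleftrightarrow>
     (\<forall>m0\<in>prob_measures. \<forall>m1\<in>prob_measures.
        F m1 - F m0 = (\<integral>l\<in>{0..1}.
            (\<integral>x. dF (mix_measure l m0 m1) x \<partial>m1) - (\<integral>x. dF (mix_measure l m0 m1) x \<partial>m0) \<partial>lborel))"

definition standing_F ::
  "real \<Rightarrow> (('a::euclidean_space) measure \<Rightarrow> real) \<Rightarrow> ('a measure \<Rightarrow> 'a \<Rightarrow> real) \<Rightarrow> bool" where
  "standing_F p F dF \<longleftrightarrow>
     (\<forall>m\<in>prob_measures. F m \<ge> 0) \<and>
     linear_derivative F dF \<and>
     (\<exists>L>0. \<forall>m\<in>prob_measures. \<forall>m'\<in>prob_measures. \<forall>x x'.
        ennreal \<bar>dF m x - dF m' x'\<bar> \<le> ennreal L * (wasserstein p m m' + ennreal (dist x x'))) \<and>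
     (\<exists>M>0. \<forall>m\<in>prob_measures. \<forall>x. \<bar>dF m x\<bar> \<le> M)"

definition standing_U :: "real \<Rightarrow> (('a::euclidean_space) \<Rightarrow> real) \<Rightarrow> bool" where
  "standing_U p U \<longleftrightarrow>
     U \<in> borel_measurable borel \<and>
     (\<integral>\<^sup>+ x. ennreal (exp (- U x)) \<partial>lborel) = 1 \<and>
     (\<exists>b. AE x in lborel. b \<le> U x) \<and>
     Liminf at_infinity (\<lambda>x. ereal (U x / norm x powr p)) > 0"

definition gibbs_density ::
  "real \<Rightarrow> (('a::euclidean_space) measure \<Rightarrow> 'a \<Rightarrow> real) \<Rightarrow> ('a \<Rightarrow> real) \<Rightarrow> 'a measure \<Rightarrow> 'a \<Rightarrow> real" where
  "gibbs_density \<sigma> dF U m x =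
     exp (- 2 / \<sigma>\<^sup>2 * dF m x - U x) /
     (\<integral>y. exp (- 2 / \<sigma>\<^sup>2 * dF m y - U y) \<partial>lborel)"

definition Phi ::
  "real \<Rightarrow> (('a::euclidean_space) measure \<Rightarrow> 'a \<Rightarrow> real) \<Rightarrow> ('a \<Rightarrow> real) \<Rightarrow> 'a measure \<Rightarrow> 'a measure" where
  "Phi \<sigma> dF U m = density lborel (\<lambda>x. ennreal (gibbs_density \<sigma> dF U m x))"

fun dirder :: "('a::real_normed_vector) list \<Rightarrow> ('a \<Rightarrow> real) \<Rightarrow> 'a \<Rightarrow> real" where
  "dirder [] f = f"
| "dirder (v # vs) f = (\<lambda>x. deriv (\<lambda>t. dirder vs f (x + t *\<^sub>R v)) 0)"

definition smooth_fun :: "(('a::real_normed_vector) \<Rightarrow> real) \<Rightarrow> bool" where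
  "smooth_fun f \<longleftrightarrow>
     (\<forall>vs. continuous_on UNIV (dirder vs f) \<and>
        (\<forall>v x. (\<lambda>t. dirder vs f (x + t *\<^sub>R v)) differentiable (at 0)))"

definition test_fun :: "(('a::euclidean_space) \<Rightarrow> real) \<Rightarrow> bool" where
  "test_fun \<phi> \<longleftrightarrow> smooth_fun \<phi> \<and> compact (closure {x. \<phi> x \<noteq> 0})"

text \<open>\<open>m\<close> is a solution in \<open>C([0,\<infinity>); W_p)\<close> of \<open>dm_t/dt = \<alpha>(\<Phi>(m_t) - m_t)\<close>,
  \<open>m_0 = \<mu>0\<close>, in the sense of distributions (tested against \<open>C_c^\<infinity>\<close> functions,
  in time-integrated form).\<close>

definition efp_solution ::
  "real \<Rightarrow> real \<Rightarrow> real \<Rightarrow> (('a::euclidean_space) measure \<Rightarrow> 'a \<Rightarrow> real) \<Rightarrow> ('a \<Rightarrow> real)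
     \<Rightarrow> 'a measure \<Rightarrow> (real \<Rightarrow> 'a measure) \<Rightarrow> bool" where
  "efp_solution p \<sigma> \<alpha> dF U \<mu>0 m \<longleftrightarrow>
     (\<forall>t\<ge>0. m t \<in> p_moment_measures p) \<and>
     (\<forall>t\<ge>0. ((\<lambda>s. wasserstein p (m s) (m t)) \<longlongrightarrow> 0) (at t within {0..})) \<and>
     m 0 = \<mu>0 \<and>
     (\<forall>\<phi>. test_fun \<phi> \<longrightarrow> (\<forall>t\<ge>0.
        (\<integral>x. \<phi> x \<partial>m t) - (\<integral>x. \<phi> x \<partial>m 0) =
        (\<integral>s\<in>{0..t}. \<alpha> * ((\<integral>x. \<phi> x \<partial>Phi \<sigma> dF U (m s)) - (\<integral>x. \<phi> x \<partial>m s)) \<partial>lborel)))"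

end

theory Submission
  imports Defs
begin

text \<open>With \<open>K = 2M/\<sigma>\<^sup>2\<close>, the bound \<open>|dF| \<le> M\<close> puts the Gibbs weight
  \<open>exp (-2/\<sigma>\<^sup>2 dF(m,x) - U x)\<close> between \<open>exp(-K) exp(-U x)\<close> and \<open>exp K exp(-U x)\<close>;
  as \<open>exp(-U)\<close> is a probability density, its normalising constant lies between \<open>exp(-K)\<close> and
  \<open>exp K\<close>. So the density of \<open>\<Phi>(m)\<close> lies between \<open>exp(-2K) exp(-U x)\<close> and \<open>exp(2K) exp(-U x)\<close>,
  uniformly in \<open>m\<close>, and integrating against the kernel \<open>\<alpha> exp(-\<alpha>(t - s))\<close>, whose mass on
  \<open>[0,t]\<close> is \<open>1 - exp(-\<alpha> t)\<close>, gives the claim with \<open>c = exp(-2K)\<close>, \<open>C = exp(2K)\<close>.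

  The integral over \<open>[0,t]\<close> is a Henstock-Kurzweil integral, which is \<open>0\<close> for non-integrable
  integrands, so the lower bound needs integrability of \<open>s \<mapsto> \<Phi>(m s)(x)\<close>. It is in fact continuous:
  \<open>dF\<close>, and hence the normalising constant, is Lipschitz with respect to \<open>W_p\<close>, and the solution
  is \<open>W_p\<close>-continuous.\<close>

lemma wasserstein_self:
  assumes "m \<in> prob_measures"
  shows "wasserstein p m m = 0"
proof -
  let ?\<pi> = "distr m (borel :: ('a::euclidean_space \<times> 'a) measure) (\<lambda>x. (x, x))"
  have sets_m: "sets m = sets borel" and "prob_space m"
    using assms by (auto simp: prob_measures_def)
  have diag: "(\<lambda>x::'a. (x, x)) \<in> m \<rightarrow>\<^sub>M borel"
    by (simp add: measurable_cong_sets[OF sets_m refl])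
  have marginal: "distr ?\<pi> borel f = m" if "f = fst \<or> f = snd" for f :: "'a \<times> 'a \<Rightarrow> 'a"
  proof -
    have "distr ?\<pi> borel f = distr m borel (f \<circ> (\<lambda>x. (x, x)))"
      by (intro distr_distr diag)
        (use that measurable_fst[of "borel :: 'a measure" "borel :: 'a measure"]
          measurable_snd[of "borel :: 'a measure" "borel :: 'a measure"] in \<open>auto simp: borel_prod\<close>)
    also have "\<dots> = distr m borel (\<lambda>x. x)"
      using that by (auto simp: comp_def)
    finally show ?thesis
      using sets_m by (simp add: distr_id2)
  qed
  have "?\<pi> \<in> couplings m m"
    using marginal \<open>prob_space m\<close> diag by (simp add: couplings_def prob_space.prob_space_distr)
  moreover have "(\<integral>\<^sup>+ z. ennreal (dist (fst z) (snd z) powr p) \<partial>?\<pi>) = 0"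
  proof -
    have "(\<lambda>z::'a \<times> 'a. ennreal (dist (fst z) (snd z) powr p)) \<in> borel_measurable borel"
      by (intro measurable_compose[OF _ measurable_ennreal] powr_real_measurable
          borel_measurable_continuous_onI continuous_intros measurable_const) auto
    then show ?thesis
      by (subst nn_integral_distr[OF diag]) simp_all
  qed
  ultimately have "(INF \<pi>\<in>couplings m m. \<integral>\<^sup>+ z. ennreal (dist (fst z) (snd z) powr p) \<partial>\<pi>) = 0"
    by (metis (no_types, lifting) INF_lower bot.extremum_uniqueI bot_ennreal)
  then show ?thesis
    by (simp add: wasserstein_def)
qed

lemma abs_exp_diff_le:
  fixes a b c :: real
  assumes "a \<le> c" "b \<le> c"
  shows "\<bar>exp a - exp b\<bar> \<le> exp c * \<bar>a - b\<bar>"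
proof -
  have *: "exp u - exp v \<le> exp c * (u - v)" if "v \<le> u" "u \<le> c" for u v :: real
  proof -
    have "exp u - exp v = exp u * (1 - exp (v - u))"
      by (simp add: algebra_simps exp_diff)
    also have "\<dots> \<le> exp u * (u - v)"
      by (intro mult_left_mono) (use exp_ge_add_one_self[of "v - u"] in linarith, simp)
    also have "\<dots> \<le> exp c * (u - v)"
      using that by (intro mult_right_mono) auto
    finally show ?thesis .
  qed
  show ?thesis
    using *[of b a] *[of a b] assms by (cases "b \<le> a") (auto simp: abs_if)
qed

lemma tendsto_of_ennreal_bound:
  fixes g :: "'b \<Rightarrow> real" and w :: "'b \<Rightarrow> ennreal"
  assumes "(w \<longlongrightarrow> 0) F"
    and "eventually (\<lambda>s. ennreal \<bar>g s - l\<bar> \<le> ennreal c * w s) F"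
  shows "(g \<longlongrightarrow> l) F"
proof -
  have "((\<lambda>s. ennreal c * w s) \<longlongrightarrow> 0) F"
    using ennreal_tendsto_cmult[OF _ assms(1), of "ennreal c"] by simp
  then have "((\<lambda>s. ennreal \<bar>g s - l\<bar>) \<longlongrightarrow> ennreal 0) F"
    by (intro tendsto_sandwich[OF _ assms(2) tendsto_const]) simp_all
  then have "((\<lambda>s. \<bar>g s - l\<bar>) \<longlongrightarrow> 0) F"
    by (subst (asm) tendsto_ennreal_iff) auto
  then show ?thesis
    by (simp add: tendsto_rabs_zero_iff LIM_zero_iff)
qed

lemma has_integral_exp_kernel:
  fixes \<alpha> t :: real
  assumes "t \<ge> 0"
  shows "((\<lambda>s. \<alpha> * exp (- \<alpha> * (t - s))) has_integral (1 - exp (- \<alpha> * t))) {0..t}"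
proof -
  have "((\<lambda>s. \<alpha> * exp (- \<alpha> * (t - s))) has_integral
          (exp (- \<alpha> * (t - t)) - exp (- \<alpha> * (t - 0)))) {0..t}"
  proof (rule fundamental_theorem_of_calculus[OF assms])
    fix s
    have "((\<lambda>s. exp (- \<alpha> * (t - s))) has_real_derivative exp (- \<alpha> * (t - s)) * (- \<alpha> * (0 - 1)))
            (at s within {0..t})"
      by (auto intro!: derivative_eq_intros)
    then show "((\<lambda>s. exp (- \<alpha> * (t - s))) has_vector_derivative \<alpha> * exp (- \<alpha> * (t - s)))
                 (at s within {0..t})"
      by (simp add: has_real_derivative_iff_has_vector_derivative mult.commute)
  qed
  then show ?thesis
    by simp
qed

locale gibbs_potential =
  fixes p \<sigma> M L :: real
    and dF :: "('a::euclidean_space) measure \<Rightarrow> 'a \<Rightarrow> real"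
    and U :: "'a \<Rightarrow> real"
  assumes sigma_pos: "\<sigma> > 0" and L_pos: "L > 0"
    and dF_bounded: "\<And>m x. m \<in> prob_measures \<Longrightarrow> \<bar>dF m x\<bar> \<le> M"
    and dF_lipschitz: "\<And>m m' x x'. m \<in> prob_measures \<Longrightarrow> m' \<in> prob_measures \<Longrightarrow>
        ennreal \<bar>dF m x - dF m' x'\<bar> \<le> ennreal L * (wasserstein p m m' + ennreal (dist x x'))"
    and U_measurable: "U \<in> borel_measurable borel"
    and nn_integral_exp_neg_U: "(\<integral>\<^sup>+ x. ennreal (exp (- U x)) \<partial>lborel) = 1"
begin

definition K :: real where
  "K = 2 / \<sigma>\<^sup>2 * M"

definition gibbs_weight :: "'a measure \<Rightarrow> 'a \<Rightarrow> real" where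
  "gibbs_weight m y = exp (- 2 / \<sigma>\<^sup>2 * dF m y - U y)"

definition normaliser :: "'a measure \<Rightarrow> real" where
  "normaliser m = (\<integral>y. gibbs_weight m y \<partial>lborel)"

lemma gibbs_density_eq: "gibbs_density \<sigma> dF U m x = gibbs_weight m x / normaliser m"
  by (simp add: gibbs_density_def gibbs_weight_def normaliser_def)

lemma dF_lipschitz_measure:
  assumes "m \<in> prob_measures" "m' \<in> prob_measures"
  shows "ennreal \<bar>dF m y - dF m' y\<bar> \<le> ennreal L * wasserstein p m m'"
  using dF_lipschitz[OF assms, of y y] by simp

lemma dF_lipschitz_point:
  assumes "m \<in> prob_measures"
  shows "\<bar>dF m x - dF m x'\<bar> \<le> L * dist x x'"
proof -
  have "ennreal \<bar>dF m x - dF m x'\<bar> \<le> ennreal (L * dist x x')"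
    using dF_lipschitz[OF assms assms, of x x'] wasserstein_self[OF assms] L_pos
    by (simp add: ennreal_mult)
  then show ?thesis
    using L_pos by (simp add: ennreal_le_iff)
qed

lemma borel_measurable_dF:
  assumes "m \<in> prob_measures"
  shows "dF m \<in> borel_measurable borel"
proof (rule borel_measurable_continuous_onI)
  have "L-lipschitz_on UNIV (dF m)"
    using dF_lipschitz_point[OF assms] L_pos by (intro lipschitz_onI) (auto simp: dist_real_def)
  then show "continuous_on UNIV (dF m)"
    by (rule lipschitz_on_continuous_on)
qed

lemma integrable_exp_neg_U: "integrable lborel (\<lambda>y. exp (- U y))"
  using U_measurable nn_integral_exp_neg_U by (intro integrableI_nn_integral_finite[where x = 1]) auto

lemma integral_exp_neg_U: "(\<integral>y. exp (- U y) \<partial>lborel) = 1"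
  using U_measurable nn_integral_exp_neg_U by (subst integral_eq_nn_integral) auto

lemma gibbs_exponent_bounds:
  assumes "m \<in> prob_measures"
  shows "- K \<le> - 2 / \<sigma>\<^sup>2 * dF m y" and "- 2 / \<sigma>\<^sup>2 * dF m y \<le> K"
proof -
  have "\<bar>2 / \<sigma>\<^sup>2 * dF m y\<bar> \<le> K"
    using mult_left_mono[OF dF_bounded[OF assms], of "2 / \<sigma>\<^sup>2"] sigma_pos
    by (simp add: K_def abs_mult)
  then show "- K \<le> - 2 / \<sigma>\<^sup>2 * dF m y" and "- 2 / \<sigma>\<^sup>2 * dF m y \<le> K"
    by (simp_all only: minus_divide_left[symmetric] mult_minus_left abs_le_iff) linarith+
qed

lemma gibbs_weight_bounds:
  assumes "m \<in> prob_measures"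
  shows "exp (- K) * exp (- U y) \<le> gibbs_weight m y"
    and "gibbs_weight m y \<le> exp K * exp (- U y)"
  using gibbs_exponent_bounds[OF assms, of y] by (auto simp: gibbs_weight_def simp flip: exp_add)

lemma integrable_gibbs_weight:
  assumes "m \<in> prob_measures"
  shows "integrable lborel (gibbs_weight m)"
proof (rule Bochner_Integration.integrable_bound[OF integrable_mult_right[OF integrable_exp_neg_U]])
  show "gibbs_weight m \<in> borel_measurable lborel"
    using borel_measurable_dF[OF assms] U_measurable by (simp add: gibbs_weight_def[abs_def])
  show "AE y in lborel. norm (gibbs_weight m y) \<le> norm (exp K * exp (- U y))"
    using gibbs_weight_bounds(2)[OF assms] by (simp add: gibbs_weight_def)
qed

lemma normaliser_bounds:
  assumes "m \<in> prob_measures"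
  shows "exp (- K) \<le> normaliser m" and "normaliser m \<le> exp K"
proof -
  have "(\<integral>y. exp (- K) * exp (- U y) \<partial>lborel) \<le> normaliser m"
    unfolding normaliser_def using gibbs_weight_bounds(1)[OF assms]
    by (intro integral_mono integrable_mult_right integrable_exp_neg_U integrable_gibbs_weight assms)
  then show "exp (- K) \<le> normaliser m"
    by (simp add: integral_exp_neg_U)
  have "normaliser m \<le> (\<integral>y. exp K * exp (- U y) \<partial>lborel)"
    unfolding normaliser_def using gibbs_weight_bounds(2)[OF assms]
    by (intro integral_mono integrable_mult_right integrable_exp_neg_U integrable_gibbs_weight assms)
  then show "normaliser m \<le> exp K"
    by (simp add: integral_exp_neg_U)
qed

lemma gibbs_density_bounds:
  assumes "m \<in> prob_measures"
  shows "exp (- 2 * K) * exp (- U x) \<le> gibbs_density \<sigma> dF U m x"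
    and "gibbs_density \<sigma> dF U m x \<le> exp (2 * K) * exp (- U x)"
proof -
  note Z = normaliser_bounds[OF assms] and w = gibbs_weight_bounds[OF assms, of x]
  have "exp (- 2 * K) * exp (- U x) = exp (- K) * exp (- U x) / exp K"
    by (simp add: field_simps flip: exp_add)
  also have "\<dots> \<le> gibbs_weight m x / normaliser m"
    using Z by (intro frac_le w(1)) (auto simp: gibbs_weight_def intro: less_le_trans[OF exp_gt_zero])
  finally show "exp (- 2 * K) * exp (- U x) \<le> gibbs_density \<sigma> dF U m x"
    by (simp add: gibbs_density_eq)
  have "gibbs_weight m x / normaliser m \<le> exp K * exp (- U x) / exp (- K)"
    using Z by (intro frac_le w(2)) (auto simp: gibbs_weight_def)
  also have "\<dots> = exp (2 * K) * exp (- U x)"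
    by (simp add: field_simps flip: exp_add)
  finally show "gibbs_density \<sigma> dF U m x \<le> exp (2 * K) * exp (- U x)"
    by (simp add: gibbs_density_eq)
qed

lemma gibbs_weight_lipschitz:
  assumes "m \<in> prob_measures" "m' \<in> prob_measures" and "wasserstein p m m' \<noteq> \<top>"
  shows "\<bar>gibbs_weight m y - gibbs_weight m' y\<bar>
           \<le> exp K * (2 / \<sigma>\<^sup>2) * L * enn2real (wasserstein p m m') * exp (- U y)"
proof -
  let ?w = "enn2real (wasserstein p m m')"
  have "ennreal \<bar>dF m y - dF m' y\<bar> \<le> ennreal (L * ?w)"
    using dF_lipschitz_measure[OF assms(1,2), of y] assms(3) L_pos
    by (simp add: ennreal_mult ennreal_enn2real_if)
  then have dF_diff: "\<bar>dF m y - dF m' y\<bar> \<le> L * ?w"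
    using L_pos by (simp add: ennreal_le_iff)
  have "\<bar>gibbs_weight m y - gibbs_weight m' y\<bar>
          \<le> exp (K - U y) * \<bar>(- 2 / \<sigma>\<^sup>2 * dF m y - U y) - (- 2 / \<sigma>\<^sup>2 * dF m' y - U y)\<bar>"
    unfolding gibbs_weight_def
    by (intro abs_exp_diff_le)
      (use gibbs_exponent_bounds(2)[OF assms(1), of y] gibbs_exponent_bounds(2)[OF assms(2), of y] in auto)
  also have "(- 2 / \<sigma>\<^sup>2 * dF m y - U y) - (- 2 / \<sigma>\<^sup>2 * dF m' y - U y) = 2 / \<sigma>\<^sup>2 * (dF m' y - dF m y)"
    by (simp add: algebra_simps diff_divide_distrib)
  also have "exp (K - U y) * \<bar>2 / \<sigma>\<^sup>2 * (dF m' y - dF m y)\<bar>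
               = exp (K - U y) * (2 / \<sigma>\<^sup>2 * \<bar>dF m y - dF m' y\<bar>)"
    by (simp only: abs_mult abs_minus_commute[of "dF m' y"]) simp
  also have "\<dots> \<le> exp (K - U y) * (2 / \<sigma>\<^sup>2 * (L * ?w))"
    using dF_diff by (intro mult_left_mono) auto
  also have "\<dots> = exp K * (2 / \<sigma>\<^sup>2) * L * ?w * exp (- U y)"
    by (simp add: exp_diff exp_minus field_simps)
  finally show ?thesis .
qed

lemma normaliser_lipschitz:
  assumes "m \<in> prob_measures" "m' \<in> prob_measures"
  shows "ennreal \<bar>normaliser m - normaliser m'\<bar>
           \<le> ennreal (exp K * (2 / \<sigma>\<^sup>2) * L) * wasserstein p m m'"
proof (cases "wasserstein p m m' = \<top>")
  case True
  then show ?thesis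
    using sigma_pos L_pos by (simp add: ennreal_mult_top)
next
  case False
  let ?c = "exp K * (2 / \<sigma>\<^sup>2) * L" and ?w = "enn2real (wasserstein p m m')"
  have "\<bar>normaliser m - normaliser m'\<bar> = \<bar>\<integral>y. gibbs_weight m y - gibbs_weight m' y \<partial>lborel\<bar>"
    unfolding normaliser_def using integrable_gibbs_weight[OF assms(1)] integrable_gibbs_weight[OF assms(2)]
    by simp
  also have "\<dots> \<le> (\<integral>y. ?c * ?w * exp (- U y) \<partial>lborel)"
    using gibbs_weight_lipschitz[OF assms False]
    by (intro integral_abs_bound_integral Bochner_Integration.integrable_diff integrable_gibbs_weight
        integrable_mult_right integrable_exp_neg_U assms) simp
  also have "\<dots> = ?c * ?w"
    by (simp add: integral_exp_neg_U)
  finally have "ennreal \<bar>normaliser m - normaliser m'\<bar> \<le> ennreal (?c * ?w)"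
    by (rule ennreal_leI)
  also have "\<dots> = ennreal ?c * ennreal ?w"
    by (rule ennreal_mult) (use sigma_pos L_pos in auto)
  also have "ennreal ?w = wasserstein p m m'"
    using False by (simp add: ennreal_enn2real_if)
  finally show ?thesis .
qed

lemma continuous_on_gibbs_density:
  fixes m :: "real \<Rightarrow> 'a measure"
  assumes prob: "\<And>s. s \<ge> 0 \<Longrightarrow> m s \<in> prob_measures"
    and cont: "\<And>s. s \<ge> 0 \<Longrightarrow> ((\<lambda>r. wasserstein p (m r) (m s)) \<longlongrightarrow> 0) (at s within {0..})"
  shows "continuous_on {0..} (\<lambda>s. gibbs_density \<sigma> dF U (m s) x)"
  unfolding continuous_on_def
proof
  fix s :: real assume "s \<in> {0..}"
  then have s: "s \<ge> 0" by simp
  let ?F = "at s within {0..}"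
  have near: "eventually (\<lambda>r. m r \<in> prob_measures) ?F"
    using prob by (auto simp: eventually_at_filter)
  have "((\<lambda>r. dF (m r) x) \<longlongrightarrow> dF (m s) x) ?F"
    by (rule tendsto_of_ennreal_bound[OF cont[OF s], where c = L], rule eventually_mono[OF near])
      (use prob[OF s] dF_lipschitz_measure in auto)
  moreover have "((\<lambda>r. normaliser (m r)) \<longlongrightarrow> normaliser (m s)) ?F"
    by (rule tendsto_of_ennreal_bound[OF cont[OF s], where c = "exp K * (2 / \<sigma>\<^sup>2) * L"],
        rule eventually_mono[OF near])
      (use prob[OF s] normaliser_lipschitz in auto)
  moreover have "normaliser (m s) \<noteq> 0"
    using normaliser_bounds(1)[OF prob[OF s]] by (metis exp_gt_zero not_le order_less_le)
  ultimately show "((\<lambda>r. gibbs_density \<sigma> dF U (m r) x) \<longlongrightarrow> gibbs_density \<sigma> dF U (m s) x) ?F"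
    unfolding gibbs_density_eq gibbs_weight_def by (intro tendsto_intros)
qed

lemma integral_exp_kernel_gibbs_density_bounds:
  fixes m :: "real \<Rightarrow> 'a measure" and x :: 'a
  assumes prob: "\<And>s. s \<ge> 0 \<Longrightarrow> m s \<in> prob_measures"
    and cont: "\<And>s. s \<ge> 0 \<Longrightarrow> ((\<lambda>r. wasserstein p (m r) (m s)) \<longlongrightarrow> 0) (at s within {0..})"
    and "\<alpha> > 0" "t \<ge> 0"
  defines "I \<equiv> integral {0..t} (\<lambda>s. \<alpha> * exp (- \<alpha> * (t - s)) * gibbs_density \<sigma> dF U (m s) x)"
  shows "(1 - exp (- \<alpha> * t)) * exp (- 2 * K) * exp (- U x) \<le> I"
    and "I \<le> (1 - exp (- \<alpha> * t)) * exp (2 * K) * exp (- U x)"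
proof -
  let ?k = "\<lambda>s. \<alpha> * exp (- \<alpha> * (t - s))"
  have "continuous_on {0..t} (\<lambda>s. ?k s * gibbs_density \<sigma> dF U (m s) x)"
    using continuous_on_subset[OF continuous_on_gibbs_density[OF prob cont]]
    by (intro continuous_intros) auto
  then have I: "((\<lambda>s. ?k s * gibbs_density \<sigma> dF U (m s) x) has_integral I) {0..t}"
    unfolding I_def by (intro integrable_integral integrable_continuous_interval)
  have k: "(?k has_integral (1 - exp (- \<alpha> * t))) {0..t}"
    by (rule has_integral_exp_kernel[OF \<open>t \<ge> 0\<close>])
  have "(1 - exp (- \<alpha> * t)) * (exp (- 2 * K) * exp (- U x)) \<le> I"
    by (rule has_integral_le[OF has_integral_mult_left[OF k] I])
      (use gibbs_density_bounds(1)[OF prob] \<open>\<alpha> > 0\<close> in \<open>auto intro!: mult_left_mono\<close>)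
  then show "(1 - exp (- \<alpha> * t)) * exp (- 2 * K) * exp (- U x) \<le> I"
    by (simp only: mult.assoc)
  have "I \<le> (1 - exp (- \<alpha> * t)) * (exp (2 * K) * exp (- U x))"
    by (rule has_integral_le[OF I has_integral_mult_left[OF k]])
      (use gibbs_density_bounds(2)[OF prob] \<open>\<alpha> > 0\<close> in \<open>auto intro!: mult_left_mono\<close>)
  then show "I \<le> (1 - exp (- \<alpha> * t)) * exp (2 * K) * exp (- U x)"
    by (simp only: mult.assoc)
qed

end

theorem corollary18:
  fixes p \<sigma> :: real
    and F :: "('a::euclidean_space) measure \<Rightarrow> real"
    and dF :: "'a measure \<Rightarrow> 'a \<Rightarrow> real"
    and U :: "'a \<Rightarrow> real"
  assumes "p \<ge> 1" and "\<sigma> > 0"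
    and "standing_F p F dF"
    and "standing_U p U"
  shows "\<exists>c>0. \<exists>C>0. \<forall>(\<alpha>::real) (m0 :: 'a \<Rightarrow> real) (m :: real \<Rightarrow> 'a measure).
           \<alpha> > 0 \<longrightarrow>
           m0 \<in> borel_measurable borel \<longrightarrow> (\<forall>x. m0 x \<ge> 0) \<longrightarrow>
           density lborel (\<lambda>x. ennreal (m0 x)) \<in> p_moment_measures p \<longrightarrow>
           efp_solution p \<sigma> \<alpha> dF U (density lborel (\<lambda>x. ennreal (m0 x))) m \<longrightarrow>
           (\<forall>t\<ge>0. \<forall>x.
              let mt = integral {0..t} (\<lambda>s. \<alpha> * exp (- \<alpha> * (t - s)) * gibbs_density \<sigma> dF U (m s) x)
                       + exp (- \<alpha> * t) * m0 x
              in (1 - exp (- \<alpha> * t)) * c * exp (- U x) \<le> mt \<and>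
                 mt \<le> (1 - exp (- \<alpha> * t)) * C * exp (- U x) + exp (- \<alpha> * t) * m0 x)"
proof -
  obtain L M where "L > 0"
    and "\<forall>m\<in>prob_measures. \<forall>m'\<in>prob_measures. \<forall>x x'.
           ennreal \<bar>dF m x - dF m' x'\<bar> \<le> ennreal L * (wasserstein p m m' + ennreal (dist x x'))"
    and "\<forall>m\<in>prob_measures. \<forall>x. \<bar>dF m x\<bar> \<le> M"
    using \<open>standing_F p F dF\<close> unfolding standing_F_def by blast
  then interpret G: gibbs_potential p \<sigma> M L dF U
    using \<open>\<sigma> > 0\<close> \<open>standing_U p U\<close> by unfold_locales (auto simp: standing_U_def)
  show ?thesis
  proof (rule exI[of _ "exp (- 2 * G.K)"], rule conjI[OF exp_gt_zero],
      rule exI[of _ "exp (2 * G.K)"], rule conjI[OF exp_gt_zero], intro allI impI)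
    fix \<alpha> :: real and m0 :: "'a \<Rightarrow> real" and m :: "real \<Rightarrow> 'a measure" and t :: real and x :: 'a
    assume "\<alpha> > 0" "m0 \<in> borel_measurable borel" "\<forall>x. m0 x \<ge> 0"
      "density lborel (\<lambda>x. ennreal (m0 x)) \<in> p_moment_measures p"
      "efp_solution p \<sigma> \<alpha> dF U (density lborel (\<lambda>x. ennreal (m0 x))) m" "t \<ge> 0"
    then have "m s \<in> prob_measures"
      and "((\<lambda>r. wasserstein p (m r) (m s)) \<longlongrightarrow> 0) (at s within {0..})" if "s \<ge> 0" for s
      using that by (auto simp: efp_solution_def p_moment_measures_def)
    note bounds = G.integral_exp_kernel_gibbs_density_bounds[OF this \<open>\<alpha> > 0\<close> \<open>t \<ge> 0\<close>, of x]
    show "let mt = integral {0..t} (\<lambda>s. \<alpha> * exp (- \<alpha> * (t - s)) * gibbs_density \<sigma> dF U (m s) x)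
                   + exp (- \<alpha> * t) * m0 x
          in (1 - exp (- \<alpha> * t)) * exp (- 2 * G.K) * exp (- U x) \<le> mt \<and>
             mt \<le> (1 - exp (- \<alpha> * t)) * exp (2 * G.K) * exp (- U x) + exp (- \<alpha> * t) * m0 x"
      using bounds \<open>\<forall>x. m0 x \<ge> 0\<close> by (auto simp: Let_def intro: add_increasing2)
  qed
qed

end
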